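(* For every integer $n\ge 2$, the dihedral Artin group $DA_n=\langle a,b\mid [aba\cdots]_n=[bab\cdots]_n\rangle$ is Cayley systolic.
   Context: $[xyx\cdots]_k$ denotes the alternating word $xyx\cdots$ of length $k$. A group is Cayley systolic if it admits a systolic presentation, i.e. a presentation $\langle S\mid R\rangle$ with $S$ a finite generating set such that: $S\cap S^{-1}=\emptyset$; $R=\{a\cdot b\cdot c^{-1}\mid a,b,c\in S,\ abc^{-1}=e\}$ presents the group; there are no $a,b,c\in S$ with $abc=e$; $abc\in S\Rightarrow ab,bc\in S$; and $S$ satisfies: (1) if $ua=wb\in S$, $ud=wc\in S$, $u\neq w$, $a\neq d$ ($u,w,a,b,c,d\in S$), then $\exists k\in S$: $w=uk$ or $ua=udk$; (2) if $bv=cx\in S$, $av=dx\in S$, $v\neq x$, $a\neq b$, then $\exists k\in S$: $v=kx$ or $av=kbv$; (3) if $ux,uv\in S$, $vb=xc\in S$, $v\neq x$, then $\exists k\in S$: $k=uvb$ or $v=xk$; (4) if $vw,xw\in S$, $dx=av\in S$, $v\neq x$, then $\exists k\in S$: $k=avw$ or $x=kv$; (5) if $wv,wx,uv,ux\in S$, $v\neq x$, $u\neq w$, then $\exists k\in S$: $w=ku$ or $x=vk$. *)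

theory Defs
  imports "HOL-Algebra.Algebra"
begin

text \<open>Words in the free group on generators of type 'x: a letter (x, True) is x,
  a letter (x, False) is x^-1.\<close>
type_synonym 'x word = "('x \<times> bool) list"

definition eval_word :: "('g, 'm) monoid_scheme \<Rightarrow> ('x \<Rightarrow> 'g) \<Rightarrow> 'x word \<Rightarrow> 'g" where
  "eval_word G \<iota> w =
     foldr (\<lambda>(x, e) acc. (if e then \<iota> x else inv\<^bsub>G\<^esub> (\<iota> x)) \<otimes>\<^bsub>G\<^esub> acc) w \<one>\<^bsub>G\<^esub>"

definition inv_word :: "'x word \<Rightarrow> 'x word" where
  "inv_word w = rev (map (\<lambda>(x, e). (x, \<not> e)) w)"

inductive elem_step :: "'x set \<Rightarrow> 'x word set \<Rightarrow> 'x word \<Rightarrow> 'x word \<Rightarrow> bool"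
  for Gen :: "'x set" and R :: "'x word set" where
  free_del: "\<lbrakk> w1 \<in> lists (Gen \<times> UNIV); w2 \<in> lists (Gen \<times> UNIV); x \<in> Gen \<rbrakk>
     \<Longrightarrow> elem_step Gen R (w1 @ [(x, e), (x, \<not> e)] @ w2) (w1 @ w2)"
| free_ins: "\<lbrakk> w1 \<in> lists (Gen \<times> UNIV); w2 \<in> lists (Gen \<times> UNIV); x \<in> Gen \<rbrakk>
     \<Longrightarrow> elem_step Gen R (w1 @ w2) (w1 @ [(x, e), (x, \<not> e)] @ w2)"
| rel_del: "\<lbrakk> w1 \<in> lists (Gen \<times> UNIV); w2 \<in> lists (Gen \<times> UNIV); r \<in> R \<rbrakk>
     \<Longrightarrow> elem_step Gen R (w1 @ r @ w2) (w1 @ w2)"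
| rel_ins: "\<lbrakk> w1 \<in> lists (Gen \<times> UNIV); w2 \<in> lists (Gen \<times> UNIV); r \<in> R \<rbrakk>
     \<Longrightarrow> elem_step Gen R (w1 @ w2) (w1 @ r @ w2)"

definition pres_equiv :: "'x set \<Rightarrow> 'x word set \<Rightarrow> 'x word \<Rightarrow> 'x word \<Rightarrow> bool" where
  "pres_equiv Gen R = (elem_step Gen R)\<^sup>*\<^sup>*"

text \<open>The group G is presented by <Gen | R> via the generator map \<iota>: the images of Gen
  generate G, the relators hold in G, and every word trivial in G is a consequence
  of the relators (i.e. the kernel of F(Gen) -> G is the normal closure of R).\<close>
definition presents :: "('g, 'm) monoid_scheme \<Rightarrow> 'x set \<Rightarrow> ('x \<Rightarrow> 'g) \<Rightarrow> 'x word set \<Rightarrow> bool" where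
  "presents G Gen \<iota> R \<longleftrightarrow>
     \<iota> ` Gen \<subseteq> carrier G \<and>
     generate G (\<iota> ` Gen) = carrier G \<and>
     R \<subseteq> lists (Gen \<times> UNIV) \<and>
     (\<forall>r \<in> R. eval_word G \<iota> r = \<one>\<^bsub>G\<^esub>) \<and>
     (\<forall>w \<in> lists (Gen \<times> UNIV). eval_word G \<iota> w = \<one>\<^bsub>G\<^esub> \<longrightarrow> pres_equiv Gen R w [])"

definition tri_rels :: "('g, 'm) monoid_scheme \<Rightarrow> 'g set \<Rightarrow> 'g word set" where
  "tri_rels G S = {[(a, True), (b, True), (c, False)] | a b c.
      a \<in> S \<and> b \<in> S \<and> c \<in> S \<and> a \<otimes>\<^bsub>G\<^esub> b \<otimes>\<^bsub>G\<^esub> inv\<^bsub>G\<^esub> c = \<one>\<^bsub>G\<^esub>}"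

definition systolic_presentation :: "('g, 'm) monoid_scheme \<Rightarrow> 'g set \<Rightarrow> bool" where
  "systolic_presentation G S \<longleftrightarrow>
     S \<subseteq> carrier G \<and> finite S \<and>
     S \<inter> (\<lambda>s. inv\<^bsub>G\<^esub> s) ` S = {} \<and>
     presents G S id (tri_rels G S) \<and>
     (\<nexists>a b c. a \<in> S \<and> b \<in> S \<and> c \<in> S \<and> a \<otimes>\<^bsub>G\<^esub> b \<otimes>\<^bsub>G\<^esub> c = \<one>\<^bsub>G\<^esub>) \<and>
     (\<forall>a\<in>S. \<forall>b\<in>S. \<forall>c\<in>S. a \<otimes>\<^bsub>G\<^esub> b \<otimes>\<^bsub>G\<^esub> c \<in> S \<longrightarrow>
         a \<otimes>\<^bsub>G\<^esub> b \<in> S \<and> b \<otimes>\<^bsub>G\<^esub> c \<in> S) \<and>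
     \<comment> \<open>(1)\<close>
     (\<forall>u\<in>S. \<forall>w\<in>S. \<forall>a\<in>S. \<forall>b\<in>S. \<forall>c\<in>S. \<forall>d\<in>S.
        u \<otimes>\<^bsub>G\<^esub> a = w \<otimes>\<^bsub>G\<^esub> b \<and> u \<otimes>\<^bsub>G\<^esub> a \<in> S \<and>
        u \<otimes>\<^bsub>G\<^esub> d = w \<otimes>\<^bsub>G\<^esub> c \<and> u \<otimes>\<^bsub>G\<^esub> d \<in> S \<and> u \<noteq> w \<and> a \<noteq> d \<longrightarrow>
        (\<exists>k\<in>S. w = u \<otimes>\<^bsub>G\<^esub> k \<or> u \<otimes>\<^bsub>G\<^esub> a = u \<otimes>\<^bsub>G\<^esub> d \<otimes>\<^bsub>G\<^esub> k)) \<and>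
     \<comment> \<open>(2)\<close>
     (\<forall>a\<in>S. \<forall>b\<in>S. \<forall>c\<in>S. \<forall>d\<in>S. \<forall>v\<in>S. \<forall>x\<in>S.
        b \<otimes>\<^bsub>G\<^esub> v = c \<otimes>\<^bsub>G\<^esub> x \<and> b \<otimes>\<^bsub>G\<^esub> v \<in> S \<and>
        a \<otimes>\<^bsub>G\<^esub> v = d \<otimes>\<^bsub>G\<^esub> x \<and> a \<otimes>\<^bsub>G\<^esub> v \<in> S \<and> v \<noteq> x \<and> a \<noteq> b \<longrightarrow>
        (\<exists>k\<in>S. v = k \<otimes>\<^bsub>G\<^esub> x \<or> a \<otimes>\<^bsub>G\<^esub> v = k \<otimes>\<^bsub>G\<^esub> b \<otimes>\<^bsub>G\<^esub> v)) \<and>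
     \<comment> \<open>(3)\<close>
     (\<forall>u\<in>S. \<forall>v\<in>S. \<forall>x\<in>S. \<forall>b\<in>S. \<forall>c\<in>S.
        u \<otimes>\<^bsub>G\<^esub> x \<in> S \<and> u \<otimes>\<^bsub>G\<^esub> v \<in> S \<and>
        v \<otimes>\<^bsub>G\<^esub> b = x \<otimes>\<^bsub>G\<^esub> c \<and> v \<otimes>\<^bsub>G\<^esub> b \<in> S \<and> v \<noteq> x \<longrightarrow>
        (\<exists>k\<in>S. k = u \<otimes>\<^bsub>G\<^esub> v \<otimes>\<^bsub>G\<^esub> b \<or> v = x \<otimes>\<^bsub>G\<^esub> k)) \<and>
     \<comment> \<open>(4)\<close>
     (\<forall>v\<in>S. \<forall>w\<in>S. \<forall>x\<in>S. \<forall>a\<in>S. \<forall>d\<in>S.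
        v \<otimes>\<^bsub>G\<^esub> w \<in> S \<and> x \<otimes>\<^bsub>G\<^esub> w \<in> S \<and>
        d \<otimes>\<^bsub>G\<^esub> x = a \<otimes>\<^bsub>G\<^esub> v \<and> d \<otimes>\<^bsub>G\<^esub> x \<in> S \<and> v \<noteq> x \<longrightarrow>
        (\<exists>k\<in>S. k = a \<otimes>\<^bsub>G\<^esub> v \<otimes>\<^bsub>G\<^esub> w \<or> x = k \<otimes>\<^bsub>G\<^esub> v)) \<and>
     \<comment> \<open>(5)\<close>
     (\<forall>u\<in>S. \<forall>v\<in>S. \<forall>w\<in>S. \<forall>x\<in>S.
        w \<otimes>\<^bsub>G\<^esub> v \<in> S \<and> w \<otimes>\<^bsub>G\<^esub> x \<in> S \<and> u \<otimes>\<^bsub>G\<^esub> v \<in> S \<and> u \<otimes>\<^bsub>G\<^esub> x \<in> S \<and>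
        v \<noteq> x \<and> u \<noteq> w \<longrightarrow>
        (\<exists>k\<in>S. w = k \<otimes>\<^bsub>G\<^esub> u \<or> x = v \<otimes>\<^bsub>G\<^esub> k))"

definition Cayley_systolic :: "('g, 'm) monoid_scheme \<Rightarrow> bool" where
  "Cayley_systolic G \<longleftrightarrow> (\<exists>S. systolic_presentation G S)"

definition alt_word :: "'x \<Rightarrow> 'x \<Rightarrow> nat \<Rightarrow> 'x word" where
  "alt_word x y k = map (\<lambda>i. (if even i then x else y, True)) [0..<k]"

text \<open>The dihedral Artin relator [aba...]_n ([bab...]_n)^-1, with a = True, b = False.\<close>
definition dihedral_artin_relator :: "nat \<Rightarrow> bool word" where
  "dihedral_artin_relator n = alt_word True False n @ inv_word (alt_word False True n)"

end

theory Submission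
  imports Defs
begin

text \<open>Put x_0 = a, x_1 = b and x_(k+2) = (ab)^-1 x_k ab. Then x_k x_(k+1) = ab for every k, and
  the Artin relation forces x_n = a, so the sequence has period n. Take
  S = {x_0, ..., x_(n-1), ab}. The triangular relations x_k x_(k+1) = ab imply the Artin
  relation, and every x_k is a word in a and b, so S with its triangular relations presents the
  group. The exponent sum is a homomorphism to the integers which is 1 on every x_k and 2 on ab.
  Hence no product of three elements of S is trivial or lies in S, no element of S has its
  inverse in S, and a product of two elements of S lies in S only if it equals ab; the last fact
  makes each of the conditions (1)--(5) vacuous.\<close>

lemma eval_word_Nil [simp]: "eval_word G f [] = \<one>\<^bsub>G\<^esub>"
  by (simp add: eval_word_def)

lemma eval_word_Cons [simp]:
  "eval_word G f (p # w) =
     (if snd p then f (fst p) else inv\<^bsub>G\<^esub> (f (fst p))) \<otimes>\<^bsub>G\<^esub> eval_word G f w"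
  by (cases p) (simp add: eval_word_def)

lemma inv_word_Nil [simp]: "inv_word [] = []"
  by (simp add: inv_word_def)

lemma inv_word_Cons [simp]: "inv_word (p # w) = inv_word w @ [(fst p, \<not> snd p)]"
  by (cases p) (simp add: inv_word_def)

lemma inv_word_append [simp]: "inv_word (u @ v) = inv_word v @ inv_word u"
  by (simp add: inv_word_def)

lemma inv_word_inv_word [simp]: "inv_word (inv_word w) = w"
  by (induction w) auto

lemma inv_word_in_lists_iff [simp]: "inv_word w \<in> lists (A \<times> UNIV) \<longleftrightarrow> w \<in> lists (A \<times> UNIV)"
  by (induction w) auto

lemma map_apfst_inv_word [simp]: "map (apfst f) (inv_word w) = inv_word (map (apfst f) w)"
  by (induction w) auto

lemma map_apfst_alt_word [simp]: "map (apfst f) (alt_word x y k) = alt_word (f x) (f y) k"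
  by (simp add: alt_word_def)

lemma alt_word_0 [simp]: "alt_word x y 0 = []"
  by (simp add: alt_word_def)

lemma alt_word_Suc: "alt_word x y (Suc k) = (x, True) # alt_word y x k"
  unfolding alt_word_def by (simp add: upt_conv_Cons map_Suc_upt[symmetric] del: upt_Suc)

lemma alt_word_Suc_snoc: "alt_word x y (Suc k) = alt_word x y k @ [(if even k then x else y, True)]"
  by (simp add: alt_word_def)

lemma map_apfst_in_lists [simp]:
  "f ` A \<subseteq> B \<Longrightarrow> w \<in> lists (A \<times> UNIV) \<Longrightarrow> map (apfst f) w \<in> lists (B \<times> UNIV)"
  by (induction w) auto

lemma alt_word_in_lists [simp]: "x \<in> A \<Longrightarrow> y \<in> A \<Longrightarrow> alt_word x y k \<in> lists (A \<times> UNIV)"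
  by (auto simp: alt_word_def)

context group
begin

lemma eval_word_closed:
  "f ` Gen \<subseteq> carrier G \<Longrightarrow> w \<in> lists (Gen \<times> UNIV) \<Longrightarrow> eval_word G f w \<in> carrier G"
  by (induction w) (auto simp: image_subset_iff)

lemma eval_word_append:
  assumes f: "f ` Gen \<subseteq> carrier G" and "u \<in> lists (Gen \<times> UNIV)" "v \<in> lists (Gen \<times> UNIV)"
  shows "eval_word G f (u @ v) = eval_word G f u \<otimes> eval_word G f v"
  using assms(2)
proof (induction u)
  case (Cons p u)
  then have "f (fst p) \<in> carrier G" "eval_word G f u \<in> carrier G" "eval_word G f v \<in> carrier G"
    using f assms(3) by (auto intro: eval_word_closed)
  with Cons show ?case by (simp add: m_assoc)
qed (simp add: eval_word_closed[OF f assms(3)])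

lemma eval_word_inv_word:
  assumes f: "f ` Gen \<subseteq> carrier G" and "w \<in> lists (Gen \<times> UNIV)"
  shows "eval_word G f (inv_word w) = inv (eval_word G f w)"
  using assms(2)
proof (induction w)
  case (Cons p w)
  obtain x e where p: "p = (x, e)"
    by (cases p)
  have x: "x \<in> Gen" and w: "w \<in> lists (Gen \<times> UNIV)"
    using Cons p by auto
  have "f x \<in> carrier G" "eval_word G f w \<in> carrier G"
    using f x w by (auto intro: eval_word_closed)
  with Cons.IH p x w show ?case
    by (simp add: eval_word_append[OF f] inv_mult_group)
qed simp

lemma generate_eval_word:
  assumes f: "f ` Gen \<subseteq> carrier G" and "g \<in> generate G (f ` Gen)"
  shows "\<exists>w\<in>lists (Gen \<times> UNIV). eval_word G f w = g"
  using assms(2)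
proof (induction rule: generate.induct)
  case one
  show ?case by (intro bexI[of _ "[]"]) auto
next
  case (incl h)
  then obtain x where "x \<in> Gen" "h = f x" by blast
  with f show ?case by (intro bexI[of _ "[(x, True)]"]) auto
next
  case (inv h)
  then obtain x where "x \<in> Gen" "h = f x" by blast
  with f show ?case by (intro bexI[of _ "[(x, False)]"]) auto
next
  case (eng h1 h2)
  then obtain w1 w2 where "w1 \<in> lists (Gen \<times> UNIV)" "eval_word G f w1 = h1"
    "w2 \<in> lists (Gen \<times> UNIV)" "eval_word G f w2 = h2" by blast
  with f show ?case by (intro bexI[of _ "w1 @ w2"]) (auto simp: eval_word_append)
qed

end

section \<open>Equivalence of words in a presentation\<close>

lemma elem_step_sym: "elem_step Gen R u v \<Longrightarrow> elem_step Gen R v u"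
proof (induction rule: elem_step.induct)
  case (free_del w1 w2 x e)
  then show ?case by (rule elem_step.free_ins)
next
  case (free_ins w1 w2 x e)
  then show ?case by (rule elem_step.free_del)
next
  case (rel_del w1 w2 r)
  then show ?case by (rule elem_step.rel_ins)
next
  case (rel_ins w1 w2 r)
  then show ?case by (rule elem_step.rel_del)
qed

lemma pres_equiv_refl [simp]: "pres_equiv Gen R u u"
  by (simp add: pres_equiv_def)

lemma pres_equiv_trans [trans]: "pres_equiv Gen R u v \<Longrightarrow> pres_equiv Gen R v w \<Longrightarrow> pres_equiv Gen R u w"
  by (simp add: pres_equiv_def)

lemma pres_equiv_sym: "pres_equiv Gen R u v \<Longrightarrow> pres_equiv Gen R v u"
  unfolding pres_equiv_def
  by (induction rule: rtranclp_induct) (auto intro: converse_rtranclp_into_rtranclp elem_step_sym)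

lemma elem_step_in_context:
  assumes "elem_step Gen R u v" "p \<in> lists (Gen \<times> UNIV)" "q \<in> lists (Gen \<times> UNIV)"
  shows "elem_step Gen R (p @ u @ q) (p @ v @ q)"
  using assms
proof (induction rule: elem_step.induct)
  case (free_del w1 w2 x e)
  then show ?case using elem_step.free_del[of "p @ w1" Gen "w2 @ q" x R e] by simp
next
  case (free_ins w1 w2 x e)
  then show ?case using elem_step.free_ins[of "p @ w1" Gen "w2 @ q" x R e] by simp
next
  case (rel_del w1 w2 r)
  then show ?case using elem_step.rel_del[of "p @ w1" Gen "w2 @ q" r R] by simp
next
  case (rel_ins w1 w2 r)
  then show ?case using elem_step.rel_ins[of "p @ w1" Gen "w2 @ q" r R] by simp
qed

lemma pres_equiv_in_context:
  assumes "pres_equiv Gen R u v" "p \<in> lists (Gen \<times> UNIV)" "q \<in> lists (Gen \<times> UNIV)"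
  shows "pres_equiv Gen R (p @ u @ q) (p @ v @ q)"
  using assms(1) unfolding pres_equiv_def
  by (induction rule: rtranclp_induct)
    (auto intro: rtranclp.rtrancl_into_rtrancl elem_step_in_context[OF _ assms(2,3)])

lemma pres_equiv_append:
  assumes "pres_equiv Gen R u v" "pres_equiv Gen R u' v'"
    and "v \<in> lists (Gen \<times> UNIV)" "u' \<in> lists (Gen \<times> UNIV)"
  shows "pres_equiv Gen R (u @ u') (v @ v')"
  using pres_equiv_in_context[OF assms(1) _ assms(4), of "[]"]
    pres_equiv_in_context[OF assms(2) assms(3), of "[]"]
  by (auto intro: pres_equiv_trans)

lemma pres_equiv_append_left:
  "pres_equiv Gen R u v \<Longrightarrow> p \<in> lists (Gen \<times> UNIV) \<Longrightarrow> pres_equiv Gen R (p @ u) (p @ v)"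
  using pres_equiv_in_context[of Gen R u v p "[]"] by simp

lemma pres_equiv_append_right:
  "pres_equiv Gen R u v \<Longrightarrow> q \<in> lists (Gen \<times> UNIV) \<Longrightarrow> pres_equiv Gen R (u @ q) (v @ q)"
  using pres_equiv_in_context[of Gen R u v "[]" q] by simp

lemma pres_equiv_relator: "r \<in> R \<Longrightarrow> pres_equiv Gen R r []"
  using elem_step.rel_del[of "[]" Gen "[]" r R] by (simp add: pres_equiv_def)

lemma pres_equiv_append_inv_word: "w \<in> lists (Gen \<times> UNIV) \<Longrightarrow> pres_equiv Gen R (w @ inv_word w) []"
proof (induction w)
  case (Cons p w)
  obtain x e where p: "p = (x, e)"
    by (cases p)
  have x: "x \<in> Gen" and w: "w \<in> lists (Gen \<times> UNIV)"
    using Cons p by auto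
  have "pres_equiv Gen R ([p] @ (w @ inv_word w) @ [(x, \<not> e)]) ([p] @ [] @ [(x, \<not> e)])"
    using Cons.IH p x w by (intro pres_equiv_in_context) auto
  moreover have "pres_equiv Gen R [(x, e), (x, \<not> e)] []"
    using elem_step.free_del[of "[]" Gen "[]" x R e] x by (simp add: pres_equiv_def)
  ultimately show ?case
    using p by (simp add: pres_equiv_trans)
qed simp

lemma pres_equiv_inv_word_append: "w \<in> lists (Gen \<times> UNIV) \<Longrightarrow> pres_equiv Gen R (inv_word w @ w) []"
  using pres_equiv_append_inv_word[of "inv_word w" Gen R] by simp

lemma pres_equiv_inv_word:
  assumes "pres_equiv Gen R u v" "u \<in> lists (Gen \<times> UNIV)" "v \<in> lists (Gen \<times> UNIV)"
  shows "pres_equiv Gen R (inv_word u) (inv_word v)"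
proof -
  have "pres_equiv Gen R (inv_word u) (inv_word u @ v @ inv_word v)"
    using pres_equiv_append_left[OF pres_equiv_sym[OF pres_equiv_append_inv_word[OF assms(3)]]] assms(2)
    by simp
  also have "pres_equiv Gen R \<dots> ((inv_word u @ u) @ inv_word v)"
    using pres_equiv_in_context[OF pres_equiv_sym[OF assms(1)], of "inv_word u" "inv_word v"] assms
    by simp
  also have "pres_equiv Gen R \<dots> (inv_word v)"
    using pres_equiv_append_right[OF pres_equiv_inv_word_append[OF assms(2)]] assms(3) by simp
  finally show ?thesis .
qed

lemma elem_step_map_apfst:
  assumes "elem_step Gen R v v'" and f: "f ` Gen \<subseteq> S"
    and rel: "\<And>r. r \<in> R \<Longrightarrow> pres_equiv S T (map (apfst f) r) []"
  shows "pres_equiv S T (map (apfst f) v) (map (apfst f) v')"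
  using assms(1)
proof cases
  case (free_del w1 w2 x e)
  have "elem_step S T (map (apfst f) w1 @ [(f x, e), (f x, \<not> e)] @ map (apfst f) w2)
      (map (apfst f) w1 @ map (apfst f) w2)"
    using free_del f by (intro elem_step.free_del) auto
  with free_del show ?thesis
    unfolding pres_equiv_def by simp
next
  case (free_ins w1 w2 x e)
  have "elem_step S T (map (apfst f) w1 @ map (apfst f) w2)
      (map (apfst f) w1 @ [(f x, e), (f x, \<not> e)] @ map (apfst f) w2)"
    using free_ins f by (intro elem_step.free_ins) auto
  with free_ins show ?thesis
    unfolding pres_equiv_def by simp
next
  case (rel_del w1 w2 r)
  have "pres_equiv S T (map (apfst f) w1 @ map (apfst f) r @ map (apfst f) w2)
      (map (apfst f) w1 @ [] @ map (apfst f) w2)"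
    using rel_del f by (intro pres_equiv_in_context rel) auto
  with rel_del show ?thesis by simp
next
  case (rel_ins w1 w2 r)
  have "pres_equiv S T (map (apfst f) w1 @ map (apfst f) r @ map (apfst f) w2)
      (map (apfst f) w1 @ [] @ map (apfst f) w2)"
    using rel_ins f by (intro pres_equiv_in_context rel) auto
  with rel_ins show ?thesis by (simp add: pres_equiv_sym)
qed

lemma pres_equiv_map_apfst:
  assumes "pres_equiv Gen R v v'" "f ` Gen \<subseteq> S"
    and "\<And>r. r \<in> R \<Longrightarrow> pres_equiv S T (map (apfst f) r) []"
  shows "pres_equiv S T (map (apfst f) v) (map (apfst f) v')"
  using assms(1) unfolding pres_equiv_def[of Gen]
proof (induction rule: rtranclp_induct)
  case (step v' v'')
  then show ?case
    using elem_step_map_apfst[OF step.hyps(2) assms(2,3)] by (blast intro: pres_equiv_trans)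
qed simp

section \<open>Exponent sum\<close>

definition exp_sum :: "'x word \<Rightarrow> int" where
  "exp_sum w = (\<Sum>p\<leftarrow>w. if snd p then 1 else -1)"

lemma exp_sum_Nil [simp]: "exp_sum [] = 0"
  by (simp add: exp_sum_def)

lemma exp_sum_Cons [simp]: "exp_sum (p # w) = (if snd p then 1 else -1) + exp_sum w"
  by (simp add: exp_sum_def)

lemma exp_sum_append [simp]: "exp_sum (u @ v) = exp_sum u + exp_sum v"
  by (simp add: exp_sum_def)

lemma exp_sum_inv_word [simp]: "exp_sum (inv_word w) = - exp_sum w"
  by (induction w) auto

lemma exp_sum_alt_word [simp]: "exp_sum (alt_word x y k) = int k"
  by (induction k arbitrary: x y) (auto simp: alt_word_Suc)

lemma pres_equiv_exp_sum:
  assumes "pres_equiv Gen R u v" "\<And>r. r \<in> R \<Longrightarrow> exp_sum r = 0"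
  shows "exp_sum u = exp_sum v"
proof -
  have "exp_sum v' = exp_sum v''" if "elem_step Gen R v' v''" for v' v''
    using that by cases (simp_all add: assms(2))
  with assms(1) show ?thesis
    unfolding pres_equiv_def by (induction rule: rtranclp_induct) auto
qed

context group
begin

lemma presents_exp_sum_eq:
  assumes pres: "presents G Gen f R" and R: "\<And>r. r \<in> R \<Longrightarrow> exp_sum r = 0"
    and "u \<in> lists (Gen \<times> UNIV)" "v \<in> lists (Gen \<times> UNIV)"
    and "eval_word G f u = eval_word G f v"
  shows "exp_sum u = exp_sum v"
proof -
  have f: "f ` Gen \<subseteq> carrier G" using pres by (simp add: presents_def)
  have "eval_word G f (u @ inv_word v) = \<one>"
    using assms f by (simp add: eval_word_append eval_word_inv_word eval_word_closed)
  then have "pres_equiv Gen R (u @ inv_word v) []"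
    using pres assms by (simp add: presents_def)
  then show ?thesis
    using pres_equiv_exp_sum[OF _ R] by fastforce
qed

lemma presents_exp_sum_hom:
  assumes pres: "presents G Gen f R" and R: "\<And>r. r \<in> R \<Longrightarrow> exp_sum r = 0"
  obtains deg :: "'a \<Rightarrow> int" where
    "\<And>g h. g \<in> carrier G \<Longrightarrow> h \<in> carrier G \<Longrightarrow> deg (g \<otimes> h) = deg g + deg h"
    "\<And>w. w \<in> lists (Gen \<times> UNIV) \<Longrightarrow> deg (eval_word G f w) = exp_sum w"
proof -
  have f: "f ` Gen \<subseteq> carrier G" and gen: "generate G (f ` Gen) = carrier G"
    using pres by (auto simp: presents_def)
  define deg where "deg g = exp_sum (SOME w. w \<in> lists (Gen \<times> UNIV) \<and> eval_word G f w = g)" for g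
  have deg_eval: "deg (eval_word G f w) = exp_sum w" if w: "w \<in> lists (Gen \<times> UNIV)" for w
  proof -
    let ?w = "SOME w'. w' \<in> lists (Gen \<times> UNIV) \<and> eval_word G f w' = eval_word G f w"
    have "?w \<in> lists (Gen \<times> UNIV) \<and> eval_word G f ?w = eval_word G f w"
      by (rule someI[of _ w]) (simp add: w)
    then have "exp_sum ?w = exp_sum w"
      using presents_exp_sum_eq[OF pres R, of ?w w] w by simp
    then show ?thesis
      by (simp add: deg_def)
  qed
  have deg_mult: "deg (g \<otimes> h) = deg g + deg h" if gh: "g \<in> carrier G" "h \<in> carrier G" for g h
  proof -
    obtain u where u: "u \<in> lists (Gen \<times> UNIV)" "eval_word G f u = g"
      using generate_eval_word[OF f, of g] gh(1) unfolding gen by blast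
    obtain v where v: "v \<in> lists (Gen \<times> UNIV)" "eval_word G f v = h"
      using generate_eval_word[OF f, of h] gh(2) unfolding gen by blast
    have "deg (g \<otimes> h) = deg (eval_word G f (u @ v))"
      using u v f by (simp add: eval_word_append)
    also have "\<dots> = exp_sum u + exp_sum v"
      using u v by (simp add: deg_eval)
    also have "\<dots> = deg g + deg h"
      using deg_eval[OF u(1)] deg_eval[OF v(1)] by (simp add: u v)
    finally show ?thesis .
  qed
  from deg_mult deg_eval show thesis
    by (rule that)
qed

section \<open>Changing the generators of a presentation\<close>

lemma presents_change_generators:
  assumes pres: "presents G Gen f R"
    and S: "S \<subseteq> carrier G" "f ` Gen \<subseteq> S"
    and T: "T \<subseteq> lists (S \<times> UNIV)" "\<And>t. t \<in> T \<Longrightarrow> eval_word G id t = \<one>"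
    and rel: "\<And>r. r \<in> R \<Longrightarrow> pres_equiv S T (map (apfst f) r) []"
    and rep: "\<And>s. s \<in> S \<Longrightarrow> \<exists>v\<in>lists (Gen \<times> UNIV).
                 eval_word G f v = s \<and> pres_equiv S T [(s, True)] (map (apfst f) v)"
  shows "presents G S id T"
proof -
  have f: "f ` Gen \<subseteq> carrier G" and gen: "generate G (f ` Gen) = carrier G"
    using pres by (auto simp: presents_def)
  have rep_word: "\<exists>v\<in>lists (Gen \<times> UNIV).
      eval_word G f v = eval_word G id w \<and> pres_equiv S T w (map (apfst f) v)"
    if "w \<in> lists (S \<times> UNIV)" for w
    using that
  proof (induction w)
    case (Cons p w)
    obtain s e where p: "p = (s, e)"
      by (cases p)
    have s: "s \<in> S" and w: "w \<in> lists (S \<times> UNIV)"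
      using Cons p by auto
    obtain u where u: "u \<in> lists (Gen \<times> UNIV)" "eval_word G f u = eval_word G id w"
      "pres_equiv S T w (map (apfst f) u)"
      using Cons.IH w by blast
    obtain v where v: "v \<in> lists (Gen \<times> UNIV)" "eval_word G f v = s"
      "pres_equiv S T [(s, True)] (map (apfst f) v)"
      using rep[OF s] by blast
    define v' where "v' = (if e then v else inv_word v)"
    have v': "v' \<in> lists (Gen \<times> UNIV)" "eval_word G f v' = (if e then s else inv s)"
      "pres_equiv S T [(s, e)] (map (apfst f) v')"
      using v s S f pres_equiv_inv_word[OF v(3)]
      by (auto simp: v'_def eval_word_inv_word map_apfst_in_lists)
    have "pres_equiv S T ([(s, e)] @ w) (map (apfst f) v' @ map (apfst f) u)"
      using v' u s w S by (intro pres_equiv_append) (auto simp: map_apfst_in_lists)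
    moreover have "eval_word G f (v' @ u) = eval_word G id ((s, e) # w)"
      using v' u f by (simp add: eval_word_append)
    moreover have "v' @ u \<in> lists (Gen \<times> UNIV)"
      using u v' by simp
    ultimately show ?case
      unfolding p id_def by (simp only: append_Cons append_Nil map_append[symmetric]) blast
  qed (auto intro: bexI[of _ "[]"])
  show ?thesis
    unfolding presents_def
  proof (intro conjI ballI impI)
    show "id ` S \<subseteq> carrier G" using S by simp
    have "carrier G \<subseteq> generate G S"
      using mono_generate[OF S(2)] gen by simp
    then show "generate G (id ` S) = carrier G"
      using generate_incl[OF S(1)] by auto
    show "T \<subseteq> lists (S \<times> UNIV)" by (rule T)
    show "eval_word G id t = \<one>" if "t \<in> T" for t using T(2) that .
  next
    fix w assume w: "w \<in> lists (S \<times> UNIV)" "eval_word G id w = \<one>"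
    then obtain v where v: "v \<in> lists (Gen \<times> UNIV)" "eval_word G f v = \<one>"
      "pres_equiv S T w (map (apfst f) v)"
      using rep_word by metis
    then have "pres_equiv Gen R v []"
      using pres by (simp add: presents_def)
    then have "pres_equiv S T (map (apfst f) v) []"
      using pres_equiv_map_apfst[OF _ S(2) rel] by fastforce
    with v(3) show "pres_equiv S T w []"
      by (rule pres_equiv_trans)
  qed
qed

end

section \<open>Triangular presentations\<close>

lemma (in group) pres_equiv_tri_rels:
  assumes "S \<subseteq> carrier G" "s \<in> S" "t \<in> S" "u \<in> S" "s \<otimes> t = u"
  shows "pres_equiv S (tri_rels G S) [(s, True), (t, True)] [(u, True)]"
proof -
  have "[(s, True), (t, True), (u, False)] \<in> tri_rels G S"
    using assms unfolding tri_rels_def by (auto simp: subset_iff)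
  then have "pres_equiv S (tri_rels G S) ([] @ [(s, True), (t, True), (u, False)] @ [(u, True)])
      ([] @ [] @ [(u, True)])"
    using assms by (intro pres_equiv_in_context pres_equiv_relator) auto
  moreover have "elem_step S (tri_rels G S) ([(s, True), (t, True)] @ [])
      ([(s, True), (t, True)] @ [(u, False), (u, \<not> False)] @ [])"
    using assms by (intro elem_step.free_ins) auto
  ultimately show ?thesis
    unfolding pres_equiv_def by simp
qed

lemma (in group) eval_word_tri_rels:
  assumes "S \<subseteq> carrier G" "t \<in> tri_rels G S"
  shows "eval_word G id t = \<one>"
  using assms unfolding tri_rels_def by (auto simp: m_assoc subset_iff)

lemma (in group) products_of_graded_set:
  fixes deg :: "'a \<Rightarrow> int"
  assumes S: "S \<subseteq> carrier G"
    and deg_mult: "\<And>g h. g \<in> carrier G \<Longrightarrow> h \<in> carrier G \<Longrightarrow> deg (g \<otimes> h) = deg g + deg h"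
    and deg_S: "\<And>s. s \<in> S \<Longrightarrow> deg s = 1 \<or> (deg s = 2 \<and> s = z)"
  shows product_in_set: "\<And>s t. s \<in> S \<Longrightarrow> t \<in> S \<Longrightarrow> s \<otimes> t \<in> S \<Longrightarrow> s \<otimes> t = z"
    and inv_notin_set: "\<And>s. s \<in> S \<Longrightarrow> inv s \<notin> S"
    and triple_notin_set: "\<And>s t r. s \<in> S \<Longrightarrow> t \<in> S \<Longrightarrow> r \<in> S \<Longrightarrow> s \<otimes> t \<otimes> r \<notin> S"
    and triple_ne_one: "\<And>s t r. s \<in> S \<Longrightarrow> t \<in> S \<Longrightarrow> r \<in> S \<Longrightarrow> s \<otimes> t \<otimes> r \<noteq> \<one>"
proof -
  have carr [simp]: "s \<in> carrier G" if "s \<in> S" for s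
    using S that by blast
  have deg_ge_1: "deg s \<ge> 1" if "s \<in> S" for s
    using deg_S[OF that] by auto
  have deg_one: "deg \<one> = 0"
    using deg_mult[of \<one> \<one>] by simp
  have triple: "deg (s \<otimes> t \<otimes> r) \<ge> 3" if "s \<in> S" "t \<in> S" "r \<in> S" for s t r
    using deg_mult[of "s \<otimes> t" r] deg_mult[of s t] deg_ge_1[of s] deg_ge_1[of t] deg_ge_1[of r] that
    by simp
  show "s \<otimes> t = z" if "s \<in> S" "t \<in> S" "s \<otimes> t \<in> S" for s t
    using deg_S[OF that(3)] deg_mult[of s t] deg_ge_1[of s] deg_ge_1[of t] that by auto
  show "inv s \<notin> S" if s: "s \<in> S" for s
  proof
    assume "inv s \<in> S"
    then show False
      using deg_ge_1[of "inv s"] deg_ge_1[OF s] deg_mult[of s "inv s"] deg_one s by simp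
  qed
  show "s \<otimes> t \<otimes> r \<notin> S" "s \<otimes> t \<otimes> r \<noteq> \<one>" if "s \<in> S" "t \<in> S" "r \<in> S" for s t r
    using triple[OF that] deg_S[of "s \<otimes> t \<otimes> r"] deg_one by auto
qed

text \<open>Each of the conditions (1)--(5) puts two products with a common factor into S. Both
  products then equal z, so cancelling the common factor identifies two elements that the
  condition assumes to be distinct.\<close>

lemma (in group) systolic_presentation_if_graded:
  fixes deg :: "'a \<Rightarrow> int"
  assumes S: "S \<subseteq> carrier G" "finite S" and pres: "presents G S id (tri_rels G S)"
    and deg_mult: "\<And>g h. g \<in> carrier G \<Longrightarrow> h \<in> carrier G \<Longrightarrow> deg (g \<otimes> h) = deg g + deg h"
    and deg_S: "\<And>s. s \<in> S \<Longrightarrow> deg s = 1 \<or> (deg s = 2 \<and> s = z)"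
  shows "systolic_presentation G S"
proof -
  note products = products_of_graded_set[OF S(1) deg_mult deg_S]
  have [simp]: "s \<in> carrier G" if "s \<in> S" for s
    using S(1) that by blast
  have left: "t = t'" if "s \<in> S" "t \<in> S" "t' \<in> S" "s \<otimes> t \<in> S" "s \<otimes> t' \<in> S" for s t t'
    using products(1)[of s t] products(1)[of s t'] that by simp
  have right: "s = s'" if "s \<in> S" "s' \<in> S" "t \<in> S" "s \<otimes> t \<in> S" "s' \<otimes> t \<in> S" for s s' t
    using products(1)[of s t] products(1)[of s' t] that by simp
  show ?thesis
    unfolding systolic_presentation_def
  proof (intro conjI)
    show "S \<inter> (\<lambda>s. inv s) ` S = {}"
      using products(2) by blast
    show "\<nexists>a b c. a \<in> S \<and> b \<in> S \<and> c \<in> S \<and> a \<otimes> b \<otimes> c = \<one>"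
      using products(4) by blast
    show "\<forall>a\<in>S. \<forall>b\<in>S. \<forall>c\<in>S. a \<otimes> b \<otimes> c \<in> S \<longrightarrow> a \<otimes> b \<in> S \<and> b \<otimes> c \<in> S"
      using products(3) by blast
  qed (use S pres in simp_all, (intro ballI impI; elim conjE; metis left right)+)
qed

section \<open>The cyclic generators of a dihedral Artin group\<close>

text \<open>In the dihedral Artin group the elements x_0, ..., x_(n-1) of this sequence generate
  the cyclic presentation x_0 x_1 = x_1 x_2 = ... = x_(n-1) x_0, with common value ab.\<close>

fun cyclic_gen :: "('g, 'm) monoid_scheme \<Rightarrow> 'g \<Rightarrow> 'g \<Rightarrow> nat \<Rightarrow> 'g" where
  "cyclic_gen G a b 0 = a"
| "cyclic_gen G a b (Suc 0) = b"
| "cyclic_gen G a b (Suc (Suc k)) =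
     inv\<^bsub>G\<^esub> (a \<otimes>\<^bsub>G\<^esub> b) \<otimes>\<^bsub>G\<^esub> (cyclic_gen G a b k \<otimes>\<^bsub>G\<^esub> (a \<otimes>\<^bsub>G\<^esub> b))"

context group
begin

lemma mult_inv_cancel_left [simp]: "x \<in> carrier G \<Longrightarrow> y \<in> carrier G \<Longrightarrow> x \<otimes> (inv x \<otimes> y) = y"
  by (simp add: m_assoc[symmetric])

lemma inv_mult_cancel_left [simp]: "x \<in> carrier G \<Longrightarrow> y \<in> carrier G \<Longrightarrow> inv x \<otimes> (x \<otimes> y) = y"
  by (simp add: m_assoc[symmetric])

lemma cyclic_gen_closed [simp]:
  "a \<in> carrier G \<Longrightarrow> b \<in> carrier G \<Longrightarrow> cyclic_gen G a b k \<in> carrier G"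
  by (induction k rule: nat_induct2) auto

lemma cyclic_gen_mult_Suc:
  assumes "a \<in> carrier G" "b \<in> carrier G"
  shows "cyclic_gen G a b k \<otimes> cyclic_gen G a b (Suc k) = a \<otimes> b"
proof (induction k rule: nat_induct2)
  case 1
  show ?case
    using assms by (simp add: inv_mult_group m_assoc)
next
  case (step k)
  have "cyclic_gen G a b (k + 2) \<otimes> cyclic_gen G a b (Suc (k + 2)) =
      inv (a \<otimes> b) \<otimes> ((cyclic_gen G a b k \<otimes> cyclic_gen G a b (Suc k)) \<otimes> (a \<otimes> b))"
    using assms by (simp add: m_assoc)
  with step show ?case
    using assms by simp
qed simp

lemma cyclic_gen_shift:
  assumes "a \<in> carrier G" "b \<in> carrier G"
  shows "(a \<otimes> b) [^] j \<otimes> cyclic_gen G a b (k + 2 * j) = cyclic_gen G a b k \<otimes> (a \<otimes> b) [^] j"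
proof (induction j)
  case (Suc j)
  have "(a \<otimes> b) [^] Suc j \<otimes> cyclic_gen G a b (k + 2 * Suc j) =
      ((a \<otimes> b) [^] j \<otimes> cyclic_gen G a b (k + 2 * j)) \<otimes> (a \<otimes> b)"
    using assms by (simp add: m_assoc)
  with Suc show ?case
    using assms by (simp add: m_assoc)
qed (simp add: assms)

lemma eval_alt_word_even:
  assumes "f x \<in> carrier G" "f y \<in> carrier G"
  shows "eval_word G f (alt_word x y (2 * j)) = (f x \<otimes> f y) [^] j"
proof (induction j)
  case (Suc j)
  have "eval_word G f (alt_word x y (2 * Suc j)) = (f x \<otimes> f y) \<otimes> (f x \<otimes> f y) [^] j"
    using Suc assms by (simp add: alt_word_Suc m_assoc)
  then show ?case
    using nat_pow_Suc2[of "f x \<otimes> f y" j] assms by simp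
qed simp

lemma cyclic_gen_period:
  assumes a: "a \<in> carrier G" and b: "b \<in> carrier G"
    and artin: "eval_word G f (alt_word x y n) = eval_word G f (alt_word y x n)"
    and f: "f x = a" "f y = b"
  shows "cyclic_gen G a b n = a"
proof -
  have fxy: "f x \<in> carrier G" "f y \<in> carrier G"
    using a b f by simp_all
  have f_xy: "f ` {x, y} \<subseteq> carrier G"
    using fxy by simp
  have snoc: "eval_word G f (alt_word x y (Suc (2 * m))) = (a \<otimes> b) [^] m \<otimes> a" for m
    using eval_word_append[OF f_xy, of "alt_word x y (2 * m)" "[(x, True)]"]
      eval_alt_word_even[of f x y m, OF fxy] a b f
    by (simp add: alt_word_Suc_snoc)
  define m where "m = n div 2"
  have "n = 2 * m \<or> n = Suc (2 * m)"
    unfolding m_def by presburger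
  then show ?thesis
  proof
    assume n: "n = 2 * m"
    have "(a \<otimes> b) [^] m \<otimes> cyclic_gen G a b n = a \<otimes> eval_word G f (alt_word x y n)"
      using cyclic_gen_shift[OF a b, of m 0] eval_alt_word_even[of f x y m, OF fxy] f n by simp
    also have "\<dots> = eval_word G f (alt_word x y (Suc n))"
      using artin f by (simp add: alt_word_Suc)
    also have "\<dots> = (a \<otimes> b) [^] m \<otimes> a"
      using snoc n by simp
    finally show ?thesis
      using a b by simp
  next
    assume n: "n = Suc (2 * m)"
    have "(a \<otimes> b) [^] m \<otimes> cyclic_gen G a b n = eval_word G f (alt_word y x n)"
      using cyclic_gen_shift[OF a b, of m 1] eval_alt_word_even[of f x y m, OF fxy] f n
      by (simp add: alt_word_Suc)
    also have "\<dots> = (a \<otimes> b) [^] m \<otimes> a"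
      using artin snoc n by simp
    finally show ?thesis
      using a b by simp
  qed
qed

lemma cyclic_gen_add_period:
  assumes a: "a \<in> carrier G" and b: "b \<in> carrier G" and period: "cyclic_gen G a b n = a"
  shows "cyclic_gen G a b (k + n) = cyclic_gen G a b k"
proof (induction k rule: nat_induct2)
  case 1
  have "a \<otimes> cyclic_gen G a b (Suc n) = a \<otimes> b"
    using cyclic_gen_mult_Suc[OF a b, of n] period by simp
  then show ?case
    using a b by simp
next
  case (step k)
  then show ?case
    by (simp add: add.commute[of k] add.assoc[symmetric])
qed (simp add: period)

lemma cyclic_gen_mod:
  assumes a: "a \<in> carrier G" and b: "b \<in> carrier G" and period: "cyclic_gen G a b n = a"
  shows "cyclic_gen G a b (k mod n) = cyclic_gen G a b k"
proof -
  have "cyclic_gen G a b (k mod n + q * n) = cyclic_gen G a b (k mod n)" for q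
  proof (induction q)
    case (Suc q)
    then show ?case
      using cyclic_gen_add_period[OF a b period, of "k mod n + q * n"]
      by (simp add: add.assoc add.commute[of n])
  qed simp
  from this[of "k div n"] show ?thesis
    by (simp add: mod_div_mult_eq)
qed

end

declare cyclic_gen.simps(3) [simp del]

locale dihedral_artin_group = group G for G :: "('g, 'm) monoid_scheme" (structure) +
  fixes n :: nat and a b :: 'g
  assumes n_ge_2: "2 \<le> n"
    and presentation: "presents G UNIV (\<lambda>x. if x then a else b) {dihedral_artin_relator n}"
begin

abbreviation \<iota> :: "bool \<Rightarrow> 'g" where
  "\<iota> \<equiv> \<lambda>x. if x then a else b"

abbreviation x :: "nat \<Rightarrow> 'g" where
  "x \<equiv> cyclic_gen G a b"

definition gens :: "'g set" where
  "gens = x ` {..<n} \<union> {a \<otimes> b}"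

abbreviation gens_equiv :: "'g word \<Rightarrow> 'g word \<Rightarrow> bool" (infix "\<approx>" 50) where
  "u \<approx> v \<equiv> pres_equiv gens (tri_rels G gens) u v"

lemma a_closed [simp]: "a \<in> carrier G" and b_closed [simp]: "b \<in> carrier G"
  using presentation by (auto simp: presents_def)

lemma \<iota>_image: "\<iota> ` UNIV \<subseteq> carrier G"
  by auto

lemma artin_relation: "eval_word G \<iota> (alt_word True False n) = eval_word G \<iota> (alt_word False True n)"
proof -
  let ?g = "eval_word G \<iota> (alt_word True False n)" and ?h = "eval_word G \<iota> (alt_word False True n)"
  have closed: "?g \<in> carrier G" "?h \<in> carrier G"
    using eval_word_closed[OF \<iota>_image] by auto
  have "eval_word G \<iota> (dihedral_artin_relator n) = \<one>"
    using presentation by (simp add: presents_def)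
  then have "?g \<otimes> inv ?h = \<one>"
    by (simp add: dihedral_artin_relator_def eval_word_append[OF \<iota>_image] eval_word_inv_word[OF \<iota>_image])
  then have "inv (inv ?h) = ?g"
    using closed by (intro inv_equality) auto
  with closed show ?thesis
    by simp
qed

lemma x_n: "x n = a"
  using cyclic_gen_period[OF a_closed b_closed artin_relation] by simp

lemma x_mod_n: "x (k mod n) = x k"
  using cyclic_gen_mod[OF a_closed b_closed x_n] .

lemma x_in_gens [simp]: "x k \<in> gens"
proof -
  have "k mod n < n"
    using n_ge_2 by simp
  then show ?thesis
    using x_mod_n[of k] unfolding gens_def by (metis UnI1 image_eqI lessThan_iff)
qed

lemma ab_in_gens [simp]: "a \<otimes> b \<in> gens"
  by (simp add: gens_def)

lemma a_in_gens [simp]: "a \<in> gens" and b_in_gens [simp]: "b \<in> gens"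
  using x_in_gens[of 0] x_in_gens[of 1] by simp_all

lemma gens_closed: "gens \<subseteq> carrier G"
  by (auto simp: gens_def)

lemma finite_gens: "finite gens"
  by (simp add: gens_def)

lemma replicate_ab_in_lists [simp]: "replicate j (a \<otimes> b, True) \<in> lists (gens \<times> UNIV)"
  by (induction j) auto

lemma map_apfst_\<iota>_in_lists [simp]: "map (apfst \<iota>) v \<in> lists (gens \<times> UNIV)"
  by (induction v) auto

lemma x_pair_equiv: "[(x k, True), (x (Suc k), True)] \<approx> [(a \<otimes> b, True)]"
  by (rule pres_equiv_tri_rels[OF gens_closed]) (simp_all add: cyclic_gen_mult_Suc)

lemma ab_equiv: "[(a \<otimes> b, True)] \<approx> [(a, True), (b, True)]"
  using x_pair_equiv[of 0] by (simp add: pres_equiv_sym)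

lemma x_swap_equiv: "[(x k, True), (a \<otimes> b, True)] \<approx> [(a \<otimes> b, True), (x (Suc (Suc k)), True)]"
proof -
  have "[(x k, True), (a \<otimes> b, True)] \<approx> [(x k, True)] @ [(x (Suc k), True), (x (Suc (Suc k)), True)]"
    using pres_equiv_append_left[OF pres_equiv_sym[OF x_pair_equiv[of "Suc k"]], of "[(x k, True)]"]
    by simp
  also have "\<dots> = [(x k, True), (x (Suc k), True)] @ [(x (Suc (Suc k)), True)]"
    by simp
  also have "\<dots> \<approx> [(a \<otimes> b, True)] @ [(x (Suc (Suc k)), True)]"
    by (rule pres_equiv_append_right[OF x_pair_equiv]) simp
  finally show ?thesis by simp
qed

lemma x_shift_equiv:
  "(x k, True) # replicate j (a \<otimes> b, True) \<approx> replicate j (a \<otimes> b, True) @ [(x (k + 2 * j), True)]"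
proof (induction j arbitrary: k)
  case (Suc j)
  have "(x k, True) # replicate (Suc j) (a \<otimes> b, True) =
      [(x k, True), (a \<otimes> b, True)] @ replicate j (a \<otimes> b, True)"
    by simp
  also have "\<dots> \<approx> [(a \<otimes> b, True)] @ ((x (Suc (Suc k)), True) # replicate j (a \<otimes> b, True))"
    using pres_equiv_append_right[OF x_swap_equiv, of "replicate j (a \<otimes> b, True)"] by simp
  also have "\<dots> \<approx> [(a \<otimes> b, True)] @ (replicate j (a \<otimes> b, True) @ [(x (Suc (Suc k) + 2 * j), True)])"
    by (rule pres_equiv_append_left[OF Suc]) simp
  finally show ?case
    by (simp add: replicate_append_same)
qed simp

lemma alt_word_even_equiv: "alt_word a b (2 * j) \<approx> replicate j (a \<otimes> b, True)"
proof (induction j)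
  case (Suc j)
  have "alt_word a b (2 * Suc j) = [(a, True), (b, True)] @ alt_word a b (2 * j)"
    by (simp add: alt_word_Suc)
  also have "\<dots> \<approx> [(a \<otimes> b, True)] @ alt_word a b (2 * j)"
    by (rule pres_equiv_append_right[OF pres_equiv_sym[OF ab_equiv]]) simp
  also have "\<dots> \<approx> [(a \<otimes> b, True)] @ replicate j (a \<otimes> b, True)"
    by (rule pres_equiv_append_left[OF Suc]) simp
  finally show ?case
    by simp
qed simp

lemma alt_word_odd_equiv:
  "alt_word b a (Suc (2 * m)) \<approx> replicate m (a \<otimes> b, True) @ [(x (Suc (2 * m)), True)]"
proof -
  have "alt_word b a (Suc (2 * m)) = [(x 1, True)] @ alt_word a b (2 * m)"
    by (simp add: alt_word_Suc)
  also have "\<dots> \<approx> (x 1, True) # replicate m (a \<otimes> b, True)"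
    using pres_equiv_append_left[OF alt_word_even_equiv, of "[(x 1, True)]"] by simp
  also have "\<dots> \<approx> replicate m (a \<otimes> b, True) @ [(x (1 + 2 * m), True)]"
    by (rule x_shift_equiv)
  finally show ?thesis
    by simp
qed

text \<open>The Artin relation follows from the triangular relations: both sides reduce to the same
  power of ab, followed by a when n is odd.\<close>

lemma alt_word_ab_equiv: "alt_word a b n \<approx> alt_word b a n"
proof -
  define m where "m = (n - 1) div 2"
  let ?w = "replicate m (a \<otimes> b, True)"
  have "n = Suc (2 * m) \<or> n = Suc (Suc (2 * m))"
    using n_ge_2 unfolding m_def by presburger
  then show ?thesis
  proof
    assume n: "n = Suc (2 * m)"
    have "alt_word a b n = alt_word a b (2 * m) @ [(a, True)]"
      by (simp add: n alt_word_Suc_snoc)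
    also have "\<dots> \<approx> ?w @ [(a, True)]"
      by (rule pres_equiv_append_right[OF alt_word_even_equiv]) simp
    also have "\<dots> = ?w @ [(x n, True)]"
      by (simp add: x_n)
    also have "\<dots> \<approx> alt_word b a n"
      using alt_word_odd_equiv[of m] n by (simp add: pres_equiv_sym)
    finally show ?thesis .
  next
    assume n: "n = Suc (Suc (2 * m))"
    have "alt_word a b n \<approx> ?w @ [(a \<otimes> b, True)]"
      using alt_word_even_equiv[of "Suc m"] n by (simp add: replicate_append_same)
    also have "\<dots> \<approx> ?w @ [(x (Suc (2 * m)), True), (x (Suc (Suc (2 * m))), True)]"
      by (rule pres_equiv_append_left[OF pres_equiv_sym[OF x_pair_equiv]]) simp
    also have "\<dots> = (?w @ [(x (Suc (2 * m)), True)]) @ [(a, True)]"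
      by (simp add: x_n[unfolded n])
    also have "\<dots> \<approx> alt_word b a (Suc (2 * m)) @ [(a, True)]"
      by (rule pres_equiv_append_right[OF pres_equiv_sym[OF alt_word_odd_equiv]]) simp
    also have "\<dots> = alt_word b a n"
      by (simp add: n alt_word_Suc_snoc[of b a "Suc (2 * m)"])
    finally show ?thesis .
  qed
qed

lemma relator_equiv: "map (apfst \<iota>) (dihedral_artin_relator n) \<approx> []"
proof -
  have "map (apfst \<iota>) (dihedral_artin_relator n) = alt_word a b n @ inv_word (alt_word b a n)"
    by (simp add: dihedral_artin_relator_def)
  also have "\<dots> \<approx> alt_word b a n @ inv_word (alt_word b a n)"
    by (rule pres_equiv_append_right[OF alt_word_ab_equiv]) simp
  also have "\<dots> \<approx> []"
    by (rule pres_equiv_append_inv_word) simp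
  finally show ?thesis .
qed

lemma x_conj_equiv: "[(x (Suc (Suc k)), True)] \<approx> [(a \<otimes> b, False), (x k, True), (a \<otimes> b, True)]"
proof -
  have "[(a \<otimes> b, False), (x k, True), (a \<otimes> b, True)] \<approx>
      [(a \<otimes> b, False)] @ [(a \<otimes> b, True), (x (Suc (Suc k)), True)]"
    using pres_equiv_append_left[OF x_swap_equiv, of "[(a \<otimes> b, False)]"] by simp
  also have "\<dots> = (inv_word [(a \<otimes> b, True)] @ [(a \<otimes> b, True)]) @ [(x (Suc (Suc k)), True)]"
    by simp
  also have "\<dots> \<approx> [] @ [(x (Suc (Suc k)), True)]"
    by (rule pres_equiv_append_right[OF pres_equiv_inv_word_append]) simp_all
  finally show ?thesis
    by (simp add: pres_equiv_sym)
qed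

lemma x_represented:
  "\<exists>v. eval_word G \<iota> v = x k \<and> exp_sum v = 1 \<and> [(x k, True)] \<approx> map (apfst \<iota>) v"
proof (induction k rule: nat_induct2)
  case 0
  show ?case by (intro exI[of _ "[(True, True)]"]) simp
next
  case 1
  show ?case by (intro exI[of _ "[(False, True)]"]) simp
next
  case (step k)
  then obtain v where v: "eval_word G \<iota> v = x k" "exp_sum v = 1" "[(x k, True)] \<approx> map (apfst \<iota>) v"
    by blast
  define w :: "bool word" where "w = [(True, True), (False, True)]"
  have "[(x (k + 2), True)] \<approx> inv_word [(a \<otimes> b, True)] @ [(x k, True)] @ [(a \<otimes> b, True)]"
    using x_conj_equiv by simp
  also have "\<dots> \<approx> inv_word (map (apfst \<iota>) w) @ map (apfst \<iota>) v @ map (apfst \<iota>) w"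
    using pres_equiv_inv_word[OF ab_equiv] v(3) ab_equiv
    by (intro pres_equiv_append) (simp_all add: w_def)
  finally have "[(x (k + 2), True)] \<approx> map (apfst \<iota>) (inv_word w @ v @ w)"
    by simp
  moreover have "eval_word G \<iota> (inv_word w @ v @ w) = x (k + 2)"
    using v(1) by (simp add: w_def eval_word_append[OF \<iota>_image] eval_word_inv_word[OF \<iota>_image]
        cyclic_gen.simps(3) inv_mult_group m_assoc)
  moreover have "exp_sum (inv_word w @ v @ w) = 1"
    using v(2) by (simp add: w_def)
  ultimately show ?case
    by blast
qed

lemma gens_represented:
  assumes "s \<in> gens"
  shows "\<exists>v. eval_word G \<iota> v = s \<and> [(s, True)] \<approx> map (apfst \<iota>) v \<and>
    (exp_sum v = 1 \<or> exp_sum v = 2 \<and> s = a \<otimes> b)"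
proof (cases "s = a \<otimes> b")
  case True
  then show ?thesis
    using ab_equiv by (intro exI[of _ "[(True, True), (False, True)]"]) simp
next
  case False
  then obtain k where "s = x k"
    using assms by (auto simp: gens_def)
  then show ?thesis
    using x_represented[of k] by auto
qed

lemma presents_gens: "presents G gens id (tri_rels G gens)"
proof (rule presents_change_generators[OF presentation gens_closed])
  show "\<iota> ` UNIV \<subseteq> gens"
    by auto
  show "tri_rels G gens \<subseteq> lists (gens \<times> UNIV)"
    by (auto simp: tri_rels_def)
  show "eval_word G id t = \<one>" if "t \<in> tri_rels G gens" for t
    using eval_word_tri_rels[OF gens_closed that] .
  show "map (apfst \<iota>) r \<approx> []" if "r \<in> {dihedral_artin_relator n}" for r
    using relator_equiv that by simp
  show "\<exists>v\<in>lists (UNIV \<times> UNIV). eval_word G \<iota> v = s \<and> [(s, True)] \<approx> map (apfst \<iota>) v"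
    if "s \<in> gens" for s
    using gens_represented[OF that] by auto
qed

lemma systolic_presentation_gens: "systolic_presentation G gens"
proof -
  have "exp_sum (dihedral_artin_relator n) = 0"
    by (simp add: dihedral_artin_relator_def)
  then obtain deg where deg_mult:
      "\<And>g h. g \<in> carrier G \<Longrightarrow> h \<in> carrier G \<Longrightarrow> deg (g \<otimes> h) = deg g + deg h"
    and deg_eval: "\<And>w. w \<in> lists (UNIV \<times> UNIV) \<Longrightarrow> deg (eval_word G \<iota> w) = exp_sum w"
    using presents_exp_sum_hom[OF presentation] by blast
  have "deg s = 1 \<or> deg s = 2 \<and> s = a \<otimes> b" if "s \<in> gens" for s
    using gens_represented[OF that] deg_eval by force
  then show ?thesis
    using systolic_presentation_if_graded[OF gens_closed finite_gens presents_gens deg_mult] by blast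
qed

end

theorem mainTheorem12:
  fixes G :: "('g, 'm) monoid_scheme" and n :: nat and a b :: 'g
  assumes "group G" and "n \<ge> 2"
    and "presents G UNIV (\<lambda>x. if x then a else b) {dihedral_artin_relator n}"
  shows "Cayley_systolic G"
proof -
  interpret dihedral_artin_group G n a b
    using assms by (simp add: dihedral_artin_group_def dihedral_artin_group_axioms_def)
  show ?thesis
    unfolding Cayley_systolic_def using systolic_presentation_gens by blast
qed

end
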